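(* Let $E$ be an almost finitely generated $R$-module and $f:R\to S$ a ring morphism satisfying going-down (generizing). Then ${}^af^{-1}(\mathrm{Supp}_R(E))=\mathrm{Supp}_S(E\otimes_RS)$.
   Context: Rings are commutative and unital. An $A$-module $E$ is almost finitely generated over $A$ if there is a ring morphism $A\to B$ such that $E$ is a finitely generated $B$-module whose induced $A$-module structure is the original one. ${}^af:\mathrm{Spec}(S)\to\mathrm{Spec}(R)$ is $Q\mapsto f^{-1}(Q)$; $\mathrm{Supp}_A(F)=\{P\in\mathrm{Spec}(A)\mid F_P\neq0\}$. *)

theory Defs
  imports Complex_Main "HOL-Library.Function_Algebras"
begin

definition is_ring_hom :: "('a::comm_ring_1 \<Rightarrow> 'b::comm_ring_1) \<Rightarrow> bool" where
  "is_ring_hom f \<longleftrightarrow> f 1 = 1 \<and> (\<forall>x y. f (x + y) = f x + f y) \<and> (\<forall>x y. f (x * y) = f x * f y)"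

definition is_ideal :: "'a::comm_ring_1 set \<Rightarrow> bool" where
  "is_ideal I \<longleftrightarrow> 0 \<in> I \<and> (\<forall>x\<in>I. \<forall>y\<in>I. x + y \<in> I) \<and> (\<forall>x\<in>I. \<forall>r. r * x \<in> I)"

definition is_prime_ideal :: "'a::comm_ring_1 set \<Rightarrow> bool" where
  "is_prime_ideal P \<longleftrightarrow> is_ideal P \<and> 1 \<notin> P \<and> (\<forall>x y. x * y \<in> P \<longrightarrow> x \<in> P \<or> y \<in> P)"

definition spec_map :: "('a::comm_ring_1 \<Rightarrow> 'b::comm_ring_1) \<Rightarrow> 'b set \<Rightarrow> 'a set" where
  "spec_map f Q = f -` Q"

definition going_down :: "('a::comm_ring_1 \<Rightarrow> 'b::comm_ring_1) \<Rightarrow> bool" where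
  "going_down f \<longleftrightarrow> (\<forall>Q P'. is_prime_ideal Q \<and> is_prime_ideal P' \<and> P' \<subseteq> spec_map f Q \<longrightarrow>
      (\<exists>Q'. is_prime_ideal Q' \<and> Q' \<subseteq> Q \<and> spec_map f Q' = P'))"

section \<open>Localization of a module (given by carrier, subtraction, zero, scalar action) at a prime\<close>

definition loc_rel :: "'r::comm_ring_1 set \<Rightarrow> 'e set \<Rightarrow> ('e \<Rightarrow> 'e \<Rightarrow> 'e) \<Rightarrow> 'e \<Rightarrow> ('r \<Rightarrow> 'e \<Rightarrow> 'e)
    \<Rightarrow> (('e \<times> 'r) \<times> ('e \<times> 'r)) set" where
  "loc_rel P M sb z sc = {((m, s), (m', s')). m \<in> M \<and> m' \<in> M \<and> s \<notin> P \<and> s' \<notin> P \<and>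
      (\<exists>t. t \<notin> P \<and> sc t (sb (sc s' m) (sc s m')) = z)}"

definition localization :: "'r::comm_ring_1 set \<Rightarrow> 'e set \<Rightarrow> ('e \<Rightarrow> 'e \<Rightarrow> 'e) \<Rightarrow> 'e \<Rightarrow> ('r \<Rightarrow> 'e \<Rightarrow> 'e)
    \<Rightarrow> ('e \<times> 'r) set set" where
  "localization P M sb z sc = (M \<times> (- P)) // loc_rel P M sb z sc"

definition loc_zero :: "'r::comm_ring_1 set \<Rightarrow> 'e set \<Rightarrow> ('e \<Rightarrow> 'e \<Rightarrow> 'e) \<Rightarrow> 'e \<Rightarrow> ('r \<Rightarrow> 'e \<Rightarrow> 'e)
    \<Rightarrow> ('e \<times> 'r) set" where
  "loc_zero P M sb z sc = loc_rel P M sb z sc `` {(z, 1)}"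

definition Supp :: "'e set \<Rightarrow> ('e \<Rightarrow> 'e \<Rightarrow> 'e) \<Rightarrow> 'e \<Rightarrow> ('r::comm_ring_1 \<Rightarrow> 'e \<Rightarrow> 'e) \<Rightarrow> 'r set set" where
  "Supp M sb z sc = {P. is_prime_ideal P \<and> localization P M sb z sc \<noteq> {loc_zero P M sb z sc}}"

definition Supp_type :: "('r::comm_ring_1 \<Rightarrow> 'e::ab_group_add \<Rightarrow> 'e) \<Rightarrow> 'r set set" where
  "Supp_type sc = Supp UNIV (-) 0 sc"

text \<open>free abelian group on E \<times> S: finitely supported integer-valued functions\<close>
definition free_ab :: "('e \<times> 's \<Rightarrow> int) set" where
  "free_ab = {z. finite {p. z p \<noteq> 0}}"

definition delta :: "'e \<times> 's \<Rightarrow> ('e \<times> 's \<Rightarrow> int)" where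
  "delta p = (\<lambda>q. if q = p then 1 else 0)"

definition tens_gens :: "('r::comm_ring_1 \<Rightarrow> 's::comm_ring_1) \<Rightarrow> ('r \<Rightarrow> 'e::ab_group_add \<Rightarrow> 'e)
    \<Rightarrow> ('e \<times> 's \<Rightarrow> int) set" where
  "tens_gens f sc =
     {delta (x + x', s) - delta (x, s) - delta (x', s) | x x' s. True} \<union>
     {delta (x, s + s') - delta (x, s) - delta (x, s') | x s s'. True} \<union>
     {delta (sc r x, s) - delta (x, f r * s) | r x s. True}"

inductive_set tens_sub :: "('r::comm_ring_1 \<Rightarrow> 's::comm_ring_1) \<Rightarrow> ('r \<Rightarrow> 'e::ab_group_add \<Rightarrow> 'e)
    \<Rightarrow> ('e \<times> 's \<Rightarrow> int) set" for f sc where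
  gen: "g \<in> tens_gens f sc \<Longrightarrow> g \<in> tens_sub f sc"
| zero: "0 \<in> tens_sub f sc"
| diff: "a \<in> tens_sub f sc \<Longrightarrow> b \<in> tens_sub f sc \<Longrightarrow> a - b \<in> tens_sub f sc"

definition tens_eq :: "('r::comm_ring_1 \<Rightarrow> 's::comm_ring_1) \<Rightarrow> ('r \<Rightarrow> 'e::ab_group_add \<Rightarrow> 'e)
    \<Rightarrow> (('e \<times> 's \<Rightarrow> int) \<times> ('e \<times> 's \<Rightarrow> int)) set" where
  "tens_eq f sc = {(z, z'). z \<in> free_ab \<and> z' \<in> free_ab \<and> z - z' \<in> tens_sub f sc}"

definition tensor :: "('r::comm_ring_1 \<Rightarrow> 's::comm_ring_1) \<Rightarrow> ('r \<Rightarrow> 'e::ab_group_add \<Rightarrow> 'e)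
    \<Rightarrow> ('e \<times> 's \<Rightarrow> int) set set" where
  "tensor f sc = free_ab // tens_eq f sc"

definition tens_zero :: "('r::comm_ring_1 \<Rightarrow> 's::comm_ring_1) \<Rightarrow> ('r \<Rightarrow> 'e::ab_group_add \<Rightarrow> 'e)
    \<Rightarrow> ('e \<times> 's \<Rightarrow> int) set" where
  "tens_zero f sc = tens_eq f sc `` {0}"

definition tens_diff :: "('e \<times> 's \<Rightarrow> int) set \<Rightarrow> ('e \<times> 's \<Rightarrow> int) set \<Rightarrow> ('e \<times> 's \<Rightarrow> int) set" where
  "tens_diff C C' = {z - z' | z z'. z \<in> C \<and> z' \<in> C'}"

text \<open>S-action on free generators: s . (x, t) = (x, s t), extended additively\<close>
definition free_sact :: "'s::comm_ring_1 \<Rightarrow> ('e \<times> 's \<Rightarrow> int) \<Rightarrow> ('e \<times> 's \<Rightarrow> int)" where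
  "free_sact s z = (\<lambda>(x, u). \<Sum>t \<in> {t. z (x, t) \<noteq> 0 \<and> s * t = u}. z (x, t))"

definition tens_scale :: "('r::comm_ring_1 \<Rightarrow> 's::comm_ring_1) \<Rightarrow> ('r \<Rightarrow> 'e::ab_group_add \<Rightarrow> 'e)
    \<Rightarrow> 's \<Rightarrow> ('e \<times> 's \<Rightarrow> int) set \<Rightarrow> ('e \<times> 's \<Rightarrow> int) set" where
  "tens_scale f sc s C = tens_eq f sc `` (free_sact s ` C)"

definition Supp_tensor :: "('r::comm_ring_1 \<Rightarrow> 's::comm_ring_1) \<Rightarrow> ('r \<Rightarrow> 'e::ab_group_add \<Rightarrow> 'e) \<Rightarrow> 's set set" where
  "Supp_tensor f sc = Supp (tensor f sc) tens_diff (tens_zero f sc) (tens_scale f sc)"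

definition afg_witness :: "('a::comm_ring_1 \<Rightarrow> 'e::ab_group_add \<Rightarrow> 'e) \<Rightarrow> ('a \<Rightarrow> 'c::comm_ring_1)
    \<Rightarrow> ('c \<Rightarrow> 'e \<Rightarrow> 'e) \<Rightarrow> bool" where
  "afg_witness sc g scB \<longleftrightarrow> is_ring_hom g \<and> module scB \<and>
     (\<exists>F. finite F \<and> module.span scB F = UNIV) \<and> (\<forall>r x. sc r x = scB (g r) x)"

end

theory Submission
  imports Defs
begin

(* Write P = f^{-1}(Q). If E_P = 0, every generator x (x) s of E (x)_R S is killed by some f(r)
   with r outside P, so (E (x)_R S)_Q = 0.
   Conversely, pick x in E with x/1 /= 0 in E_P, and view E as a finitely generated module over B
   via g. Enlarging the annihilator of x in B to a prime q disjoint from g(R - P) gives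
   p = g^{-1}(q) inside P, and going-down yields a prime Q' inside Q with f^{-1}(Q') = p.
   Since E_q /= 0, some B-linear map mu : E -> B/q does not vanish at an element y. Both B/q and
   S/Q' are extensions of the domain R/p, so on every finitely generated R-submodule of B/q there
   is an R-linear map L to S/Q' with L(mu y) /= 0. If y (x) t = 0 in E (x)_R S, this relation
   involves only finitely many elements of E; applying (L o mu) (x) id to it gives
   L(mu y) t in Q', hence t lies in Q' and so in Q. *)

section \<open>Ring homomorphisms and ideals\<close>

lemma ring_hom_1: "is_ring_hom f \<Longrightarrow> f 1 = 1"
  unfolding is_ring_hom_def by blast

lemma ring_hom_add: "is_ring_hom f \<Longrightarrow> f (x + y) = f x + f y"
  unfolding is_ring_hom_def by blast

lemma ring_hom_mult: "is_ring_hom f \<Longrightarrow> f (x * y) = f x * f y"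
  unfolding is_ring_hom_def by blast

lemma ring_hom_0: "is_ring_hom f \<Longrightarrow> f 0 = 0"
  using ring_hom_add[of f 0 0] by simp

lemma ring_hom_diff: "is_ring_hom f \<Longrightarrow> f (x - y) = f x - f y"
  using ring_hom_add[of f "x - y" y] by (simp add: eq_diff_eq)

lemma ideal_0: "is_ideal I \<Longrightarrow> 0 \<in> I"
  unfolding is_ideal_def by blast

lemma ideal_add: "is_ideal I \<Longrightarrow> x \<in> I \<Longrightarrow> y \<in> I \<Longrightarrow> x + y \<in> I"
  unfolding is_ideal_def by blast

lemma ideal_mult_left: "is_ideal I \<Longrightarrow> x \<in> I \<Longrightarrow> r * x \<in> I"
  unfolding is_ideal_def by blast

lemma ideal_mult_right: "is_ideal I \<Longrightarrow> x \<in> I \<Longrightarrow> x * r \<in> I"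
  using ideal_mult_left[of I x r] by (simp add: mult.commute)

lemma ideal_diff: "is_ideal I \<Longrightarrow> x \<in> I \<Longrightarrow> y \<in> I \<Longrightarrow> x - y \<in> I"
  using ideal_add[of I x "(- 1) * y"] ideal_mult_left[of I y "- 1"] by simp

lemma prime_ideal_is_ideal: "is_prime_ideal P \<Longrightarrow> is_ideal P"
  unfolding is_prime_ideal_def by blast

lemma prime_ideal_one_notin: "is_prime_ideal P \<Longrightarrow> 1 \<notin> P"
  unfolding is_prime_ideal_def by blast

lemma prime_ideal_mult_notin: "is_prime_ideal P \<Longrightarrow> x \<notin> P \<Longrightarrow> y \<notin> P \<Longrightarrow> x * y \<notin> P"
  unfolding is_prime_ideal_def by blast

lemma prime_ideal_vimage: "is_ring_hom f \<Longrightarrow> is_prime_ideal Q \<Longrightarrow> is_prime_ideal (f -` Q)"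
  unfolding is_prime_ideal_def is_ideal_def
  by (auto simp: ring_hom_0 ring_hom_add ring_hom_mult ring_hom_1)

definition cong_mod :: "'a::comm_ring_1 set \<Rightarrow> 'a \<Rightarrow> 'a \<Rightarrow> bool" where
  "cong_mod I a b \<longleftrightarrow> a - b \<in> I"

lemma cong_mod_refl: "is_ideal I \<Longrightarrow> cong_mod I a a"
  unfolding cong_mod_def by (simp add: ideal_0)

lemma cong_mod_sym: "is_ideal I \<Longrightarrow> cong_mod I a b \<Longrightarrow> cong_mod I b a"
  unfolding cong_mod_def using ideal_diff[of I 0 "a - b"] by (simp add: ideal_0)

lemma cong_mod_trans: "is_ideal I \<Longrightarrow> cong_mod I a b \<Longrightarrow> cong_mod I b c \<Longrightarrow> cong_mod I a c"
  unfolding cong_mod_def using ideal_add[of I "a - b" "b - c"] by simp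

lemma cong_mod_add:
  "is_ideal I \<Longrightarrow> cong_mod I a b \<Longrightarrow> cong_mod I c d \<Longrightarrow> cong_mod I (a + c) (b + d)"
  unfolding cong_mod_def using ideal_add[of I "a - b" "c - d"] by (simp add: algebra_simps)

lemma cong_mod_mult_left: "is_ideal I \<Longrightarrow> cong_mod I a b \<Longrightarrow> cong_mod I (c * a) (c * b)"
  unfolding cong_mod_def using ideal_mult_left[of I "a - b" c] by (simp add: algebra_simps)

lemma cong_mod_mem_iff: "is_ideal I \<Longrightarrow> cong_mod I a b \<Longrightarrow> a \<in> I \<longleftrightarrow> b \<in> I"
  unfolding cong_mod_def using ideal_add[of I "a - b" b] ideal_diff[of I a "a - b"] by auto

lemma is_ideal_add_principal:
  assumes "is_ideal q"
  shows "is_ideal {i + c * a |i c. i \<in> q}"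
  unfolding is_ideal_def
proof (intro conjI ballI allI)
  have "0 = 0 + 0 * a" by simp
  then show "0 \<in> {i + c * a |i c. i \<in> q}"
    using ideal_0[OF assms] by blast
next
  fix x y assume "x \<in> {i + c * a |i c. i \<in> q}" "y \<in> {i + c * a |i c. i \<in> q}"
  then obtain i c j d where "x = i + c * a" "y = j + d * a" "i \<in> q" "j \<in> q" by blast
  then have "x + y = (i + j) + (c + d) * a" "i + j \<in> q"
    using ideal_add[OF assms] by (auto simp: algebra_simps)
  then show "x + y \<in> {i + c * a |i c. i \<in> q}" by blast
next
  fix x r assume "x \<in> {i + c * a |i c. i \<in> q}"
  then obtain i c where "x = i + c * a" "i \<in> q" by blast
  then have "r * x = r * i + (r * c) * a" "r * i \<in> q"
    using ideal_mult_left[OF assms] by (auto simp: algebra_simps)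
  then show "r * x \<in> {i + c * a |i c. i \<in> q}" by blast
qed

lemma is_ideal_Union_chain:
  assumes "C \<noteq> {}" "\<And>J. J \<in> C \<Longrightarrow> is_ideal J" "\<And>J K. J \<in> C \<Longrightarrow> K \<in> C \<Longrightarrow> J \<subseteq> K \<or> K \<subseteq> J"
  shows "is_ideal (\<Union>C)"
  unfolding is_ideal_def
proof (intro conjI ballI allI)
  show "0 \<in> \<Union>C" using assms(1,2) ideal_0 by blast
next
  fix x y assume "x \<in> \<Union>C" "y \<in> \<Union>C"
  then obtain J K where "J \<in> C" "K \<in> C" "x \<in> J" "y \<in> K" by blast
  with assms(2) assms(3)[of J K] show "x + y \<in> \<Union>C" using ideal_add by blast
next
  fix x r assume "x \<in> \<Union>C"
  with assms(2) show "r * x \<in> \<Union>C" using ideal_mult_left by blast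
qed

lemma prime_ideal_if_maximal_disjoint:
  assumes q: "is_ideal q" "q \<inter> U = {}"
    and U: "1 \<in> U" "\<And>a b. a \<in> U \<Longrightarrow> b \<in> U \<Longrightarrow> a * b \<in> U"
    and maximal: "\<And>J. is_ideal J \<Longrightarrow> q \<subseteq> J \<Longrightarrow> J \<inter> U = {} \<Longrightarrow> J = q"
  shows "is_prime_ideal q"
proof -
  have meets_U: "\<exists>i c. i \<in> q \<and> i + c * a \<in> U" if "a \<notin> q" for a
  proof (rule ccontr)
    assume "\<not> ?thesis"
    then have "{i + c * a |i c. i \<in> q} \<inter> U = {}" by blast
    moreover have "q \<subseteq> {i + c * a |i c. i \<in> q}"
    proof
      fix x assume "x \<in> q"
      moreover have "x = x + 0 * a" by simp
      ultimately show "x \<in> {i + c * a |i c. i \<in> q}" by blast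
    qed
    ultimately have "{i + c * a |i c. i \<in> q} = q"
      using maximal is_ideal_add_principal[OF q(1)] by blast
    moreover have "a = 0 + 1 * a" by simp
    then have "a \<in> {i + c * a |i c. i \<in> q}"
      using ideal_0[OF q(1)] by blast
    ultimately show False using that by blast
  qed
  have "a \<in> q \<or> b \<in> q" if "a * b \<in> q" for a b
  proof (rule ccontr)
    assume "\<not> (a \<in> q \<or> b \<in> q)"
    then obtain i c j d where ij: "i \<in> q" "i + c * a \<in> U" "j \<in> q" "j + d * b \<in> U"
      using meets_U by meson
    have "(i + c * a) * (j + d * b) = i * (j + d * b) + (c * a) * j + (c * d) * (a * b)"
      by (simp add: algebra_simps)
    also have "\<dots> \<in> q"
      using ij that q(1) ideal_add ideal_mult_left ideal_mult_right by metis
    finally show False using ij U(2) q(2) by blast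
  qed
  then show ?thesis
    using q U(1) unfolding is_prime_ideal_def by blast
qed

lemma prime_ideal_disjoint_multiplicative:
  assumes I: "is_ideal I" "I \<inter> U = {}"
    and U: "1 \<in> U" "\<And>a b. a \<in> U \<Longrightarrow> b \<in> U \<Longrightarrow> a * b \<in> U"
  shows "\<exists>q. is_prime_ideal q \<and> I \<subseteq> q \<and> q \<inter> U = {}"
proof -
  define A where "A = {J. is_ideal J \<and> I \<subseteq> J \<and> J \<inter> U = {}}"
  have "\<Union>C \<in> A" if "C \<noteq> {}" "subset.chain A C" for C
    using that is_ideal_Union_chain[of C] unfolding A_def subset_chain_def by blast
  moreover have "I \<in> A" using I unfolding A_def by blast
  ultimately obtain q where "q \<in> A" and maximal: "\<And>J. J \<in> A \<Longrightarrow> q \<subseteq> J \<Longrightarrow> J = q"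
    using subset_Zorn_nonempty[of A] by blast
  then have q: "is_ideal q" "I \<subseteq> q" "q \<inter> U = {}" unfolding A_def by auto
  have "is_prime_ideal q"
  proof (rule prime_ideal_if_maximal_disjoint[OF q(1,3) U])
    fix J assume "is_ideal J" "q \<subseteq> J" "J \<inter> U = {}"
    then show "J = q" using q(2) maximal[of J] unfolding A_def by blast
  qed
  with q show ?thesis by blast
qed

section \<open>Localization and support\<close>

lemma localization_eq_zeroI:
  assumes "z \<in> M" "1 \<notin> P"
    and related: "\<And>m m' s s'. m \<in> M \<Longrightarrow> m' \<in> M \<Longrightarrow> s \<notin> P \<Longrightarrow> s' \<notin> P \<Longrightarrow>
       \<exists>t. t \<notin> P \<and> sc t (sb (sc s' m) (sc s m')) = z"
  shows "localization P M sb z sc = {loc_zero P M sb z sc}"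
proof -
  have rel: "loc_rel P M sb z sc = (M \<times> - P) \<times> (M \<times> - P)"
    unfolding loc_rel_def using related by auto
  have "(z, 1) \<in> M \<times> - P" using assms by auto
  then show ?thesis
    unfolding localization_def loc_zero_def rel quotient_def by auto
qed

text \<open>For arbitrary data \<^const>\<open>loc_rel\<close> need not be reflexive, hence the last hypothesis.\<close>
lemma localization_eq_zeroD:
  assumes zero: "localization P M sb z sc = {loc_zero P M sb z sc}" and "m \<in> M" "1 \<notin> P"
    and refl: "\<exists>t. t \<notin> P \<and> sc t (sb (sc 1 m) (sc 1 m)) = z"
  shows "\<exists>t. t \<notin> P \<and> sc t (sb (sc 1 z) (sc 1 m)) = z"
proof -
  have "loc_rel P M sb z sc `` {(m, 1)} \<in> localization P M sb z sc"
    unfolding localization_def using assms by (auto intro: quotientI)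
  then have "loc_rel P M sb z sc `` {(m, 1)} = loc_rel P M sb z sc `` {(z, 1)}"
    using zero unfolding loc_zero_def by auto
  moreover have "(m, 1) \<in> loc_rel P M sb z sc `` {(m, 1)}"
    using assms unfolding loc_rel_def by auto
  ultimately have "((z, 1), (m, 1)) \<in> loc_rel P M sb z sc" by auto
  then show ?thesis unfolding loc_rel_def by auto
qed

lemma Supp_type_iff:
  assumes "module sc"
  shows "P \<in> Supp_type sc \<longleftrightarrow> is_prime_ideal P \<and> (\<exists>x. \<forall>r. r \<notin> P \<longrightarrow> sc r x \<noteq> 0)"
proof -
  interpret module sc by (rule assms)
  have "localization P UNIV (-) 0 sc = {loc_zero P UNIV (-) 0 sc} \<longleftrightarrow>
      (\<forall>x. \<exists>r. r \<notin> P \<and> sc r x = 0)" if "is_prime_ideal P"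
  proof
    assume zero: "localization P UNIV (-) 0 sc = {loc_zero P UNIV (-) 0 sc}"
    show "\<forall>x. \<exists>r. r \<notin> P \<and> sc r x = 0"
    proof
      fix x
      have "\<exists>t. t \<notin> P \<and> sc t (sc 1 0 - sc 1 x) = 0"
        using prime_ideal_one_notin[OF that]
        by (intro localization_eq_zeroD[OF zero]) (auto intro: exI[of _ 1])
      then show "\<exists>r. r \<notin> P \<and> sc r x = 0" by auto
    qed
  next
    assume "\<forall>x. \<exists>r. r \<notin> P \<and> sc r x = 0"
    then show "localization P UNIV (-) 0 sc = {loc_zero P UNIV (-) 0 sc}"
      using prime_ideal_one_notin[OF that] by (intro localization_eq_zeroI) auto
  qed
  then show ?thesis
    unfolding Supp_type_def Supp_def by auto
qed

section \<open>The tensor product\<close>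

lemma free_ab_finite_slice: "z \<in> free_ab \<Longrightarrow> finite {t. z (x, t) \<noteq> 0}"
  unfolding free_ab_def
  using finite_vimageI[of "{p. z p \<noteq> 0}" "Pair x"] by (simp add: vimage_def inj_on_def)

text \<open>The rules of \<^const>\<open>tens_sub\<close> state its zero as \<open>\<lambda>p. 0\<close>, hence the second form of the
  zero lemmas for \<^const>\<open>free_ab\<close>, \<^const>\<open>free_sact\<close> and \<open>free_eval\<close>.\<close>
lemma free_ab_0 [simp]: "0 \<in> free_ab" "(\<lambda>p. 0) \<in> free_ab"
  by (simp_all add: free_ab_def)

lemma free_ab_add [simp]: "a \<in> free_ab \<Longrightarrow> b \<in> free_ab \<Longrightarrow> a + b \<in> free_ab"
  unfolding free_ab_def
  by (auto intro: finite_subset[of _ "{p. a p \<noteq> 0} \<union> {p. b p \<noteq> 0}"])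

lemma free_ab_diff [simp]: "a \<in> free_ab \<Longrightarrow> b \<in> free_ab \<Longrightarrow> a - b \<in> free_ab"
  unfolding free_ab_def
  by (auto intro: finite_subset[of _ "{p. a p \<noteq> 0} \<union> {p. b p \<noteq> 0}"])

lemma free_ab_uminus [simp]: "z \<in> free_ab \<Longrightarrow> - z \<in> free_ab"
  by (simp add: free_ab_def)

lemma free_ab_int_mult [simp]: "z \<in> free_ab \<Longrightarrow> (\<lambda>p. n * z p) \<in> free_ab"
  unfolding free_ab_def by (auto intro: finite_subset[of _ "{p. z p \<noteq> 0}"])

lemma free_ab_delta [simp]: "delta p \<in> free_ab"
  unfolding free_ab_def delta_def by (auto intro: finite_subset[of _ "{p}"])

lemma free_ab_induct [consumes 1, case_names zero add]:
  assumes "z \<in> free_ab" and zero: "P 0"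
    and add: "\<And>z n p. z \<in> free_ab \<Longrightarrow> P z \<Longrightarrow> P (z + (\<lambda>q. n * delta p q))"
  shows "P z"
proof -
  have "P z" if "finite A" "z \<in> free_ab" "{p. z p \<noteq> 0} \<subseteq> A" for A z
    using that
  proof (induction A arbitrary: z rule: finite_induct)
    case empty
    then have "z = 0" by (auto simp: fun_eq_iff)
    then show ?case using zero by blast
  next
    case (insert p A)
    define z' where "z' = z - (\<lambda>q. z p * delta p q)"
    have z': "z' \<in> free_ab" "{p. z' p \<noteq> 0} \<subseteq> A"
      using insert by (simp add: z'_def, auto simp: z'_def delta_def)
    then have "P (z' + (\<lambda>q. z p * delta p q))" using insert.IH add by blast
    then show ?case by (simp add: z'_def)
  qed
  then show ?thesis using assms(1) unfolding free_ab_def by blast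
qed

lemma free_sact_eq_sum:
  assumes "finite A" "{t. z (x, t) \<noteq> 0} \<subseteq> A"
  shows "free_sact s z (x, u) = (\<Sum>t | t \<in> A \<and> s * t = u. z (x, t))"
  unfolding free_sact_def prod.case using assms by (intro sum.mono_neutral_left) auto

lemma free_sact_0 [simp]: "free_sact s 0 = 0" "free_sact s (\<lambda>p. 0) = (\<lambda>p. 0)"
  by (auto simp: free_sact_def)

lemma free_sact_add:
  assumes "a \<in> free_ab" "b \<in> free_ab"
  shows "free_sact s (a + b) = free_sact s a + free_sact s b"
proof (intro ext, clarify)
  fix x u
  let ?A = "{t. a (x, t) \<noteq> 0} \<union> {t. b (x, t) \<noteq> 0}"
  have A: "finite ?A" using free_ab_finite_slice[OF assms(1)] free_ab_finite_slice[OF assms(2)] by simp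
  have "free_sact s (a + b) (x, u) = (\<Sum>t | t \<in> ?A \<and> s * t = u. (a + b) (x, t))"
    using A by (rule free_sact_eq_sum) auto
  also have "\<dots> = free_sact s a (x, u) + free_sact s b (x, u)"
    using free_sact_eq_sum[OF A, of a] free_sact_eq_sum[OF A, of b] by (auto simp: sum.distrib)
  finally show "free_sact s (a + b) (x, u) = (free_sact s a + free_sact s b) (x, u)" by simp
qed

lemma free_sact_diff:
  assumes "a \<in> free_ab" "b \<in> free_ab"
  shows "free_sact s (a - b) = free_sact s a - free_sact s b"
  using free_sact_add[of "a - b" b s] assms by (simp add: eq_diff_eq)

lemma free_sact_uminus:
  assumes "z \<in> free_ab"
  shows "free_sact s (- z) = - free_sact s z"
  using free_sact_diff[of 0 z s] assms by simp

lemma free_sact_int_mult: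
  assumes "z \<in> free_ab"
  shows "free_sact s (\<lambda>p. n * z p) = (\<lambda>p. n * free_sact s z p)"
proof (intro ext, clarify)
  fix x u
  let ?A = "{t. z (x, t) \<noteq> 0}"
  have A: "finite ?A" by (rule free_ab_finite_slice[OF assms])
  have "free_sact s (\<lambda>p. n * z p) (x, u) = (\<Sum>t | t \<in> ?A \<and> s * t = u. n * z (x, t))"
    using A by (rule free_sact_eq_sum) auto
  also have "\<dots> = n * free_sact s z (x, u)"
    using free_sact_eq_sum[OF A, of z] by (simp add: sum_distrib_left)
  finally show "free_sact s (\<lambda>p. n * z p) (x, u) = n * free_sact s z (x, u)" .
qed

lemma free_sact_delta [simp]: "free_sact s (delta (x, t)) = delta (x, s * t)"
proof (intro ext, clarify)
  fix y u
  have "free_sact s (delta (x, t)) (y, u) = (\<Sum>t' | t' \<in> {t} \<and> s * t' = u. delta (x, t) (y, t'))"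
    by (rule free_sact_eq_sum) (auto simp: delta_def)
  moreover have "{t'. t' \<in> {t} \<and> s * t' = u} = (if s * t = u then {t} else {})" by auto
  ultimately show "free_sact s (delta (x, t)) (y, u) = delta (x, s * t) (y, u)"
    by (auto simp: delta_def)
qed

lemma free_sact_1 [simp]:
  assumes "z \<in> free_ab"
  shows "free_sact 1 z = z"
proof (intro ext, clarify)
  fix x u
  have "free_sact 1 z (x, u) = (\<Sum>t | t \<in> {t. z (x, t) \<noteq> 0} \<and> 1 * t = u. z (x, t))"
    using free_ab_finite_slice[OF assms] by (intro free_sact_eq_sum) auto
  moreover have "{t. t \<in> {t. z (x, t) \<noteq> 0} \<and> 1 * t = u} = (if z (x, u) = 0 then {} else {u})"
    by auto
  ultimately show "free_sact 1 z (x, u) = z (x, u)" by simp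
qed

lemma free_sact_free_ab [simp]:
  assumes "z \<in> free_ab"
  shows "free_sact s z \<in> free_ab"
proof -
  have "{p. free_sact s z p \<noteq> 0} \<subseteq> (\<lambda>(x, t). (x, s * t)) ` {p. z p \<noteq> 0}"
  proof clarify
    fix x u assume "free_sact s z (x, u) \<noteq> 0"
    then have "{t. z (x, t) \<noteq> 0 \<and> s * t = u} \<noteq> {}"
      unfolding free_sact_def by force
    then show "(x, u) \<in> (\<lambda>(x, t). (x, s * t)) ` {p. z p \<noteq> 0}" by force
  qed
  then show ?thesis
    using assms unfolding free_ab_def by (auto intro: finite_subset)
qed

lemma tens_sub_free_ab: "z \<in> tens_sub f sc \<Longrightarrow> z \<in> free_ab"
  by (induction rule: tens_sub.induct) (auto simp: tens_gens_def simp del: minus_apply)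

lemma tens_sub_uminus: "a \<in> tens_sub f sc \<Longrightarrow> - a \<in> tens_sub f sc"
  using tens_sub.diff[OF tens_sub.zero, of a] by simp

lemma tens_sub_add: "a \<in> tens_sub f sc \<Longrightarrow> b \<in> tens_sub f sc \<Longrightarrow> a + b \<in> tens_sub f sc"
  using tens_sub.diff[of a f sc "- b"] tens_sub_uminus[of b f sc] by simp

lemma tens_sub_int_mult:
  assumes "a \<in> tens_sub f sc"
  shows "(\<lambda>p. n * a p) \<in> tens_sub f sc"
proof -
  have nat: "(\<lambda>p. int k * a p) \<in> tens_sub f sc" for k
  proof (induction k)
    case 0
    then show ?case using tens_sub.zero by (simp add: zero_fun_def)
  next
    case (Suc k)
    have "(\<lambda>p. int (Suc k) * a p) = (\<lambda>p. int k * a p) + a"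
      by (simp add: fun_eq_iff algebra_simps)
    then show ?case using Suc assms tens_sub_add by metis
  qed
  show ?thesis
  proof (cases "n \<ge> 0")
    case True
    then show ?thesis using nat[of "nat n"] by simp
  next
    case False
    then have "(\<lambda>p. n * a p) = - (\<lambda>p. int (nat (- n)) * a p)" by (simp add: fun_eq_iff)
    then show ?thesis using nat tens_sub_uminus by metis
  qed
qed

lemma free_sact_tens_gens: "z \<in> tens_gens f sc \<Longrightarrow> free_sact s z \<in> tens_gens f sc"
proof -
  assume "z \<in> tens_gens f sc"
  then consider (add_left) x x' t where "z = delta (x + x', t) - delta (x, t) - delta (x', t)"
    | (add_right) x t t' where "z = delta (x, t + t') - delta (x, t) - delta (x, t')"
    | (balanced) r x t where "z = delta (sc r x, t) - delta (x, f r * t)"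
    unfolding tens_gens_def by blast
  then show ?thesis
  proof cases
    case add_left
    then have "free_sact s z = delta (x + x', s * t) - delta (x, s * t) - delta (x', s * t)"
      by (simp add: free_sact_diff)
    then show ?thesis unfolding tens_gens_def by blast
  next
    case add_right
    then have "free_sact s z = delta (x, s * t + s * t') - delta (x, s * t) - delta (x, s * t')"
      by (simp add: free_sact_diff distrib_left)
    then show ?thesis unfolding tens_gens_def by blast
  next
    case balanced
    then have "free_sact s z = delta (sc r x, s * t) - delta (x, f r * (s * t))"
      by (simp add: free_sact_diff mult.left_commute)
    then show ?thesis unfolding tens_gens_def by blast
  qed
qed

lemma tens_sub_free_sact: "z \<in> tens_sub f sc \<Longrightarrow> free_sact s z \<in> tens_sub f sc"
proof (induction rule: tens_sub.induct)
  case (gen z)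
  then show ?case by (intro tens_sub.gen free_sact_tens_gens)
next
  case zero
  then show ?case using tens_sub.zero by (simp add: zero_fun_def)
next
  case (diff a b)
  then show ?case
    by (simp add: free_sact_diff tens_sub_free_ab tens_sub.diff del: minus_apply)
qed

definition tens_class :: "('r::comm_ring_1 \<Rightarrow> 's::comm_ring_1) \<Rightarrow> ('r \<Rightarrow> 'e::ab_group_add \<Rightarrow> 'e)
    \<Rightarrow> ('e \<times> 's \<Rightarrow> int) \<Rightarrow> ('e \<times> 's \<Rightarrow> int) set" where
  "tens_class f sc z = tens_eq f sc `` {z}"

lemma mem_tens_class:
  "w \<in> tens_class f sc z \<longleftrightarrow> z \<in> free_ab \<and> w \<in> free_ab \<and> z - w \<in> tens_sub f sc"
  by (simp add: tens_class_def tens_eq_def)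

lemma tens_class_self: "z \<in> free_ab \<Longrightarrow> z \<in> tens_class f sc z"
  by (simp add: mem_tens_class tens_sub.zero)

lemma tens_class_eq_iff:
  assumes "a \<in> free_ab" "b \<in> free_ab"
  shows "tens_class f sc a = tens_class f sc b \<longleftrightarrow> a - b \<in> tens_sub f sc"
proof
  assume "tens_class f sc a = tens_class f sc b"
  then have "b \<in> tens_class f sc a"
    using tens_class_self[OF assms(2)] by metis
  then show "a - b \<in> tens_sub f sc" by (simp add: mem_tens_class)
next
  assume ab: "a - b \<in> tens_sub f sc"
  have "a - w = (a - b) + (b - w)" "b - w = - (a - b) + (a - w)" for w by simp_all
  then show "tens_class f sc a = tens_class f sc b"
    using assms ab tens_sub_add tens_sub_uminus unfolding set_eq_iff mem_tens_class by metis
qed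

lemma tensor_eq_tens_class_image: "tensor f sc = tens_class f sc ` free_ab"
  unfolding tensor_def quotient_def tens_class_def by auto

lemma tens_zero_eq_tens_class: "tens_zero f sc = tens_class f sc 0"
  unfolding tens_zero_def tens_class_def by simp

lemma tens_diff_tens_class:
  assumes "a \<in> free_ab" "b \<in> free_ab"
  shows "tens_diff (tens_class f sc a) (tens_class f sc b) = tens_class f sc (a - b)"
proof (intro set_eqI iffI)
  fix w assume "w \<in> tens_diff (tens_class f sc a) (tens_class f sc b)"
  then obtain z z' where w: "w = z - z'" and z: "z \<in> tens_class f sc a" "z' \<in> tens_class f sc b"
    unfolding tens_diff_def by blast
  then have "(a - z) - (b - z') \<in> tens_sub f sc"
    by (simp add: mem_tens_class tens_sub.diff)
  moreover have "(a - z) - (b - z') = (a - b) - w" using w by simp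
  ultimately show "w \<in> tens_class f sc (a - b)"
    using z w by (simp add: mem_tens_class)
next
  fix w assume "w \<in> tens_class f sc (a - b)"
  then have "w + b \<in> tens_class f sc a"
    using assms by (simp add: mem_tens_class diff_diff_eq[symmetric] add.commute)
  moreover have "w = (w + b) - b" by simp
  ultimately show "w \<in> tens_diff (tens_class f sc a) (tens_class f sc b)"
    unfolding tens_diff_def using tens_class_self[OF assms(2)] by blast
qed

lemma tens_scale_tens_class:
  assumes "z \<in> free_ab"
  shows "tens_scale f sc s (tens_class f sc z) = tens_class f sc (free_sact s z)"
proof (intro set_eqI iffI)
  fix w assume "w \<in> tens_scale f sc s (tens_class f sc z)"
  then obtain z' where z': "z' \<in> tens_class f sc z" and w: "w \<in> tens_class f sc (free_sact s z')"
    unfolding tens_scale_def tens_class_def by blast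
  have "free_sact s z - w = free_sact s (z - z') + (free_sact s z' - w)"
    using z' assms by (simp add: mem_tens_class free_sact_diff)
  moreover have "free_sact s (z - z') \<in> tens_sub f sc" "free_sact s z' - w \<in> tens_sub f sc"
    using z' w by (simp_all add: mem_tens_class tens_sub_free_sact)
  ultimately have "free_sact s z - w \<in> tens_sub f sc"
    by (metis tens_sub_add)
  then show "w \<in> tens_class f sc (free_sact s z)"
    using w assms by (simp add: mem_tens_class)
next
  fix w assume "w \<in> tens_class f sc (free_sact s z)"
  then show "w \<in> tens_scale f sc s (tens_class f sc z)"
    using tens_class_self[OF assms] unfolding tens_scale_def tens_class_def by blast
qed

lemma tensor_localization_eq_zeroD:
  assumes Q: "is_prime_ideal Q" and z: "z \<in> free_ab"
    and zero: "localization Q (tensor f sc) tens_diff (tens_zero f sc) (tens_scale f sc) =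
      {loc_zero Q (tensor f sc) tens_diff (tens_zero f sc) (tens_scale f sc)}"
  shows "\<exists>t. t \<notin> Q \<and> free_sact t z \<in> tens_sub f sc"
proof -
  have "\<exists>t. t \<notin> Q \<and> tens_scale f sc t (tens_diff (tens_scale f sc 1 (tens_zero f sc))
      (tens_scale f sc 1 (tens_class f sc z))) = tens_zero f sc"
    using z prime_ideal_one_notin[OF Q]
    by (intro localization_eq_zeroD[OF zero])
      (auto simp: tensor_eq_tens_class_image tens_scale_tens_class tens_diff_tens_class
        tens_zero_eq_tens_class)
  then obtain t where "t \<notin> Q" "tens_class f sc (- free_sact t z) = tens_class f sc 0"
    using z by (auto simp: tens_scale_tens_class tens_diff_tens_class tens_zero_eq_tens_class
        free_sact_uminus)
  then show ?thesis
    using z tens_sub_uminus by (fastforce simp: tens_class_eq_iff)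
qed

lemma tensor_localization_eq_zeroI:
  assumes Q: "is_prime_ideal Q"
    and vanish: "\<And>z. z \<in> free_ab \<Longrightarrow> \<exists>t. t \<notin> Q \<and> free_sact t z \<in> tens_sub f sc"
  shows "localization Q (tensor f sc) tens_diff (tens_zero f sc) (tens_scale f sc) =
    {loc_zero Q (tensor f sc) tens_diff (tens_zero f sc) (tens_scale f sc)}"
proof (rule localization_eq_zeroI)
  fix m m' s s'
  assume "m \<in> tensor f sc" "m' \<in> tensor f sc"
  then obtain a b where ab: "a \<in> free_ab" "b \<in> free_ab" "m = tens_class f sc a" "m' = tens_class f sc b"
    by (auto simp: tensor_eq_tens_class_image)
  then have "free_sact s' a - free_sact s b \<in> free_ab" by simp
  then obtain t where "t \<notin> Q" "free_sact t (free_sact s' a - free_sact s b) \<in> tens_sub f sc"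
    using vanish by blast
  then show "\<exists>t. t \<notin> Q \<and> tens_scale f sc t (tens_diff (tens_scale f sc s' m) (tens_scale f sc s m'))
      = tens_zero f sc"
    using ab by (auto simp: tens_scale_tens_class tens_diff_tens_class tens_zero_eq_tens_class
        tens_class_eq_iff)
qed (auto simp: tensor_eq_tens_class_image tens_zero_eq_tens_class prime_ideal_one_notin[OF Q])

lemma Supp_tensor_iff:
  "Q \<in> Supp_tensor f sc \<longleftrightarrow>
     is_prime_ideal Q \<and> (\<exists>z\<in>free_ab. \<forall>t. t \<notin> Q \<longrightarrow> free_sact t z \<notin> tens_sub f sc)"
proof -
  have "localization Q (tensor f sc) tens_diff (tens_zero f sc) (tens_scale f sc) =
      {loc_zero Q (tensor f sc) tens_diff (tens_zero f sc) (tens_scale f sc)} \<longleftrightarrow>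
    (\<forall>z\<in>free_ab. \<exists>t. t \<notin> Q \<and> free_sact t z \<in> tens_sub f sc)" if "is_prime_ideal Q"
    using tensor_localization_eq_zeroD[OF that] tensor_localization_eq_zeroI[OF that] by meson
  then show ?thesis unfolding Supp_tensor_def Supp_def by auto
qed

lemma tens_sub_delta_0: "delta (0, s) \<in> tens_sub f sc"
proof -
  have "delta (0 + 0, s) - delta (0, s) - delta (0, s) \<in> tens_gens f sc"
    unfolding tens_gens_def by blast
  then have "- delta (0, s) \<in> tens_sub f sc" by (simp add: tens_sub.gen)
  then show ?thesis using tens_sub_uminus by fastforce
qed

lemma tens_sub_delta_annihilated:
  assumes "sc r x = 0"
  shows "delta (x, f r * s) \<in> tens_sub f sc"
proof -
  have "delta (sc r x, s) - delta (x, f r * s) \<in> tens_gens f sc"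
    unfolding tens_gens_def by blast
  then have "delta (0, s) - delta (x, f r * s) \<in> tens_sub f sc"
    using assms tens_sub.gen by metis
  from tens_sub.diff[OF tens_sub_delta_0[of s] this] show ?thesis by simp
qed

lemma tensor_vanishing:
  assumes Q: "is_prime_ideal Q" and ann: "\<And>x. \<exists>r. f r \<notin> Q \<and> sc r x = 0"
    and "z \<in> free_ab"
  shows "\<exists>t. t \<notin> Q \<and> (\<forall>u. free_sact (t * u) z \<in> tens_sub f sc)"
  using \<open>z \<in> free_ab\<close>
proof (induction rule: free_ab_induct)
  case zero
  show ?case using prime_ideal_one_notin[OF Q] tens_sub.zero by (auto simp: zero_fun_def)
next
  case (add z n p)
  obtain x s where p: "p = (x, s)" by (cases p)
  obtain t where t: "t \<notin> Q" "\<And>u. free_sact (t * u) z \<in> tens_sub f sc"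
    using add.IH by blast
  obtain r where r: "f r \<notin> Q" "sc r x = 0" using ann by blast
  show ?case
  proof (intro exI conjI allI)
    show "t * f r \<notin> Q" using t(1) r(1) prime_ideal_mult_notin[OF Q] by blast
    fix u
    have "free_sact (t * f r * u) (z + (\<lambda>q. n * delta p q))
        = free_sact (t * (f r * u)) z + (\<lambda>q. n * delta (x, f r * (t * u * s)) q)"
      using add.hyps by (simp add: free_sact_add free_sact_int_mult p mult_ac)
    moreover have "(\<lambda>q. n * delta (x, f r * (t * u * s)) q) \<in> tens_sub f sc"
      using tens_sub_int_mult[OF tens_sub_delta_annihilated[of sc r x f "t * u * s", OF r(2)]] .
    ultimately show "free_sact (t * f r * u) (z + (\<lambda>q. n * delta p q)) \<in> tens_sub f sc"
      using t(2) tens_sub_add by metis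
  qed
qed

lemma Supp_type_vimage_if_Supp_tensor:
  assumes "module sc" "is_ring_hom f" "Q \<in> Supp_tensor f sc"
  shows "f -` Q \<in> Supp_type sc"
proof -
  obtain z where Q: "is_prime_ideal Q" and z: "z \<in> free_ab"
    and nonzero: "\<And>t. t \<notin> Q \<Longrightarrow> free_sact t z \<notin> tens_sub f sc"
    using assms(3) unfolding Supp_tensor_iff by blast
  have "\<exists>x. \<forall>r. r \<notin> f -` Q \<longrightarrow> sc r x \<noteq> 0"
  proof (rule ccontr)
    assume "\<nexists>x. \<forall>r. r \<notin> f -` Q \<longrightarrow> sc r x \<noteq> 0"
    then have "\<And>x. \<exists>r. f r \<notin> Q \<and> sc r x = 0" by auto
    then obtain t where "t \<notin> Q" "free_sact (t * 1) z \<in> tens_sub f sc"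
      using tensor_vanishing[OF Q _ z] by blast
    then show False using nonzero by simp
  qed
  then show ?thesis
    using Supp_type_iff[OF assms(1)] prime_ideal_vimage[OF assms(2) Q] by blast
qed

section \<open>Maps that are linear modulo an ideal\<close>

definition linear_mod :: "'c::comm_ring_1 set \<Rightarrow> ('a \<Rightarrow> 'b \<Rightarrow> 'b) \<Rightarrow> ('a \<Rightarrow> 'c \<Rightarrow> 'c)
    \<Rightarrow> 'b::plus set \<Rightarrow> ('b \<Rightarrow> 'c) \<Rightarrow> bool" where
  "linear_mod I sc sc' V L \<longleftrightarrow>
     (\<forall>a\<in>V. \<forall>b\<in>V. a + b \<in> V \<longrightarrow> cong_mod I (L (a + b)) (L a + L b)) \<and>
     (\<forall>r. \<forall>a\<in>V. sc r a \<in> V \<longrightarrow> cong_mod I (L (sc r a)) (sc' r (L a)))"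

lemma linear_mod_subset: "linear_mod I sc sc' W L \<Longrightarrow> V \<subseteq> W \<Longrightarrow> linear_mod I sc sc' V L"
  unfolding linear_mod_def by blast

text \<open>\<open>vanishes_at sc q V\<close> says \<open>V\<^sub>q = 0\<close>, and \<open>has_functional_mod sc q V\<close> provides a
  nonzero \<open>B\<close>-linear map \<open>V \<rightarrow> B/q\<close>.\<close>
definition vanishes_at :: "('a \<Rightarrow> 'b \<Rightarrow> 'b::zero) \<Rightarrow> 'a set \<Rightarrow> 'b set \<Rightarrow> bool" where
  "vanishes_at sc q V \<longleftrightarrow> (\<forall>e\<in>V. \<exists>c. c \<notin> q \<and> sc c e = 0)"

definition has_functional_mod :: "('a::comm_ring_1 \<Rightarrow> 'b \<Rightarrow> 'b::plus) \<Rightarrow> 'a set \<Rightarrow> 'b set \<Rightarrow> bool" where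
  "has_functional_mod sc q V \<longleftrightarrow> (\<exists>\<mu>. linear_mod q sc (*) V \<mu> \<and> (\<exists>y\<in>V. \<mu> y \<notin> q))"

context module
begin

lemma vanishes_at_transfer:
  assumes q: "is_prime_ideal q" and c: "c \<notin> q" and cW: "\<And>e. e \<in> W \<Longrightarrow> c *s e \<in> V"
    and "vanishes_at scale q V"
  shows "vanishes_at scale q W"
  unfolding vanishes_at_def
proof
  fix e assume "e \<in> W"
  then obtain c' where c': "c' \<notin> q" "c' *s (c *s e) = 0"
    using cW \<open>vanishes_at scale q V\<close> unfolding vanishes_at_def by blast
  show "\<exists>c. c \<notin> q \<and> c *s e = 0"
    using c' prime_ideal_mult_notin[OF q c'(1) c] by (intro exI[of _ "c' * c"]) simp
qed

lemma has_functional_mod_transfer: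
  assumes q: "is_prime_ideal q" and c: "c \<notin> q" and cW: "\<And>e. e \<in> W \<Longrightarrow> c *s e \<in> V"
    and "V \<subseteq> W" and "has_functional_mod scale q V"
  shows "has_functional_mod scale q W"
proof -
  obtain \<mu> y where \<mu>: "linear_mod q scale (*) V \<mu>" and y: "y \<in> V" "\<mu> y \<notin> q"
    using \<open>has_functional_mod scale q V\<close> unfolding has_functional_mod_def by blast
  have "linear_mod q scale (*) W (\<lambda>e. \<mu> (c *s e))"
    unfolding linear_mod_def
  proof (intro conjI ballI allI impI)
    fix a b assume "a \<in> W" "b \<in> W" "a + b \<in> W"
    then have "c *s a \<in> V" "c *s b \<in> V" "c *s a + c *s b \<in> V"
      using cW by (auto simp flip: scale_right_distrib)
    then show "cong_mod q (\<mu> (c *s (a + b))) (\<mu> (c *s a) + \<mu> (c *s b))"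
      using \<mu> unfolding linear_mod_def scale_right_distrib by blast
  next
    fix b a assume "a \<in> W" "b *s a \<in> W"
    then have "c *s a \<in> V" "b *s (c *s a) \<in> V"
      using cW scale_left_commute by metis+
    then show "cong_mod q (\<mu> (c *s (b *s a))) (b * \<mu> (c *s a))"
      using \<mu> scale_left_commute unfolding linear_mod_def by metis
  qed
  moreover have "cong_mod q (\<mu> (c *s y)) (c * \<mu> y)"
    using \<mu> cW \<open>V \<subseteq> W\<close> y unfolding linear_mod_def by blast
  then have "\<mu> (c *s y) \<notin> q"
    using cong_mod_mem_iff[OF prime_ideal_is_ideal[OF q]] prime_ideal_mult_notin[OF q c y(2)]
    by blast
  ultimately show ?thesis
    using y \<open>V \<subseteq> W\<close> unfolding has_functional_mod_def by blast
qed

lemma span_insert_coeff_cong: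
  assumes y: "\<And>c. c *s y \<in> span S \<Longrightarrow> c \<in> q"
    and "e - k\<^sub>1 *s y \<in> span S" "e - k\<^sub>2 *s y \<in> span S"
  shows "cong_mod q k\<^sub>1 k\<^sub>2"
proof -
  have "(k\<^sub>1 - k\<^sub>2) *s y = (e - k\<^sub>2 *s y) - (e - k\<^sub>1 *s y)"
    by (simp add: scale_left_diff_distrib)
  then have "(k\<^sub>1 - k\<^sub>2) *s y \<in> span S" using span_diff[OF assms(3,2)] by simp
  then show ?thesis unfolding cong_mod_def by (rule y)
qed

lemma has_functional_mod_span_insert:
  assumes q: "is_prime_ideal q" and y: "\<And>c. c *s y \<in> span S \<Longrightarrow> c \<in> q"
  shows "has_functional_mod scale q (span (insert y S))"
proof -
  let ?S = "span S" and ?S' = "span (insert y S)"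
  define \<mu> where "\<mu> e = (SOME k. e - k *s y \<in> ?S)" for e
  have \<mu>: "e - \<mu> e *s y \<in> ?S" if "e \<in> ?S'" for e
    using someI_ex[of "\<lambda>k. e - k *s y \<in> ?S"] that unfolding \<mu>_def span_insert by blast
  note unique = span_insert_coeff_cong[OF y]
  have "linear_mod q scale (*) ?S' \<mu>"
    unfolding linear_mod_def
  proof (intro conjI ballI allI impI)
    fix a b assume ab: "a \<in> ?S'" "b \<in> ?S'" "a + b \<in> ?S'"
    have "(a + b) - (\<mu> a + \<mu> b) *s y = (a - \<mu> a *s y) + (b - \<mu> b *s y)"
      by (simp add: scale_left_distrib)
    also have "\<dots> \<in> ?S"
      using span_add[OF \<mu>[OF ab(1)] \<mu>[OF ab(2)]] .
    finally show "cong_mod q (\<mu> (a + b)) (\<mu> a + \<mu> b)"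
      using unique \<mu>[OF ab(3)] by blast
  next
    fix c a assume a: "a \<in> ?S'" "c *s a \<in> ?S'"
    have "c *s a - (c * \<mu> a) *s y = c *s (a - \<mu> a *s y)"
      by (simp add: scale_right_diff_distrib)
    also have "\<dots> \<in> ?S"
      using span_scale[OF \<mu>[OF a(1)]] .
    finally show "cong_mod q (\<mu> (c *s a)) (c * \<mu> a)"
      using unique \<mu>[OF a(2)] by blast
  qed
  moreover have y_S': "y \<in> ?S'" by (simp add: span_base)
  moreover have "\<mu> y \<notin> q"
  proof -
    have "y - 1 *s y \<in> ?S" by (simp add: span_zero)
    then have "cong_mod q (\<mu> y) 1" using unique \<mu>[OF y_S'] by blast
    then show ?thesis
      using cong_mod_mem_iff[OF prime_ideal_is_ideal[OF q]] prime_ideal_one_notin[OF q] by blast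
  qed
  ultimately show ?thesis unfolding has_functional_mod_def by blast
qed

lemma vanishes_at_or_has_functional_mod:
  assumes q: "is_prime_ideal q" and "finite F"
  shows "vanishes_at scale q (span F) \<or> has_functional_mod scale q (span F)"
  using \<open>finite F\<close>
proof (induction F rule: finite_induct)
  case empty
  show ?case
    using prime_ideal_one_notin[OF q] unfolding vanishes_at_def by (auto intro!: exI[of _ 1])
next
  case (insert y S)
  show ?case
  proof (cases "\<exists>c. c \<notin> q \<and> c *s y \<in> span S")
    case True
    then obtain c where c: "c \<notin> q" "c *s y \<in> span S" by blast
    have "c *s e \<in> span S" if "e \<in> span (insert y S)" for e
    proof -
      from that obtain k where k: "e - k *s y \<in> span S" unfolding span_insert by blast
      have "c *s (e - k *s y) + k *s (c *s y) \<in> span S"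
        using span_add[OF span_scale[OF k] span_scale[OF c(2)]] .
      then show ?thesis by (simp add: algebra_simps)
    qed
    then show ?thesis
      using insert.IH vanishes_at_transfer[OF q c(1)] has_functional_mod_transfer[OF q c(1)]
        span_mono[of S "insert y S"] by blast
  next
    case False
    then show ?thesis using has_functional_mod_span_insert[OF q] by blast
  qed
qed

lemma exists_functional_mod:
  assumes "is_prime_ideal q" "finite F" "span F = UNIV" and x: "\<And>c. c \<notin> q \<Longrightarrow> c *s x \<noteq> 0"
  shows "\<exists>\<mu> y. linear_mod q scale (*) UNIV \<mu> \<and> \<mu> y \<notin> q"
  using vanishes_at_or_has_functional_mod[OF assms(1,2)] x
  unfolding assms(3) vanishes_at_def has_functional_mod_def by blast

end

section \<open>Linear maps between residue rings\<close>

definition submodule_via :: "('r \<Rightarrow> 'b::comm_ring_1) \<Rightarrow> 'b set \<Rightarrow> bool" where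
  "submodule_via g V \<longleftrightarrow> (\<forall>a\<in>V. \<forall>b\<in>V. a + b \<in> V) \<and> (\<forall>r. \<forall>a\<in>V. g r * a \<in> V)"

definition adjoin :: "('r \<Rightarrow> 'b::comm_ring_1) \<Rightarrow> 'b set \<Rightarrow> 'b \<Rightarrow> 'b set" where
  "adjoin g V y = {a + g r * y |a r. a \<in> V}"

lemma submodule_via_ideal: "is_ideal I \<Longrightarrow> submodule_via g I"
  unfolding submodule_via_def is_ideal_def by blast

lemma submodule_via_diff:
  assumes g: "is_ring_hom g" and "submodule_via g V" "a \<in> V" "b \<in> V"
  shows "a - b \<in> V"
proof -
  have "g (- 1) = - 1"
    using ring_hom_diff[OF g, of 0 1] by (simp add: ring_hom_0[OF g] ring_hom_1[OF g])
  then have "a - b = a + g (- 1) * b" by simp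
  then show ?thesis using assms(2-4) unfolding submodule_via_def by metis
qed

lemma submodule_via_adjoin:
  assumes g: "is_ring_hom g" and V: "submodule_via g V"
  shows "submodule_via g (adjoin g V y)"
  unfolding submodule_via_def
proof (intro conjI ballI allI)
  fix x x' assume "x \<in> adjoin g V y" "x' \<in> adjoin g V y"
  then obtain a r a' r' where a: "a \<in> V" "a' \<in> V" "x = a + g r * y" "x' = a' + g r' * y"
    unfolding adjoin_def by blast
  then have "x + x' = (a + a') + g (r + r') * y" "a + a' \<in> V"
    using V unfolding submodule_via_def by (auto simp: ring_hom_add[OF g] algebra_simps)
  then show "x + x' \<in> adjoin g V y" unfolding adjoin_def by blast
next
  fix s x assume "x \<in> adjoin g V y"
  then obtain a r where "a \<in> V" "x = a + g r * y" unfolding adjoin_def by blast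
  then have "g s * x = g s * a + g (s * r) * y" "g s * a \<in> V"
    using V unfolding submodule_via_def by (auto simp: ring_hom_mult[OF g] algebra_simps)
  then show "g s * x \<in> adjoin g V y" unfolding adjoin_def by blast
qed

lemma subset_adjoin:
  assumes "is_ring_hom g"
  shows "V \<subseteq> adjoin g V y"
proof
  fix a assume "a \<in> V"
  moreover have "a = a + g 0 * y" by (simp add: ring_hom_0[OF assms])
  ultimately show "a \<in> adjoin g V y" unfolding adjoin_def by blast
qed

lemma mem_adjoin:
  assumes "is_ring_hom g" "0 \<in> V"
  shows "y \<in> adjoin g V y"
proof -
  have "y = 0 + g 1 * y" by (simp add: ring_hom_1[OF assms(1)])
  then show ?thesis using assms(2) unfolding adjoin_def by blast
qed

text \<open>\<open>L\<close> represents an \<open>R\<close>-linear map \<open>V/q \<rightarrow> S/Q'\<close>, where \<open>R\<close> acts on \<open>B\<close> through \<open>g\<close> and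
  on \<open>S\<close> through \<open>f\<close>.\<close>
definition quotient_linear :: "('r \<Rightarrow> 'b::comm_ring_1) \<Rightarrow> ('r \<Rightarrow> 's::comm_ring_1) \<Rightarrow> 'b set
    \<Rightarrow> 's set \<Rightarrow> 'b set \<Rightarrow> ('b \<Rightarrow> 's) \<Rightarrow> bool" where
  "quotient_linear g f q Q' V L \<longleftrightarrow>
     linear_mod Q' (\<lambda>r a. g r * a) (\<lambda>r s. f r * s) V L \<and> L ` q \<subseteq> Q'"

lemma quotient_linear_cong:
  assumes Q': "is_ideal Q'" and L: "quotient_linear g f q Q' V L" and "q \<subseteq> V"
    and "a \<in> V" "b \<in> V" "a - b \<in> q"
  shows "cong_mod Q' (L a) (L b)"
proof -
  have "a - b \<in> V" "b + (a - b) \<in> V" using assms(3-6) by auto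
  then have "cong_mod Q' (L (b + (a - b))) (L b + L (a - b))"
    using L \<open>b \<in> V\<close> unfolding quotient_linear_def linear_mod_def by blast
  then have "cong_mod Q' (L a) (L b + L (a - b))" by simp
  moreover have "L (a - b) \<in> Q'" using L assms(6) unfolding quotient_linear_def by blast
  ultimately have "(L a - (L b + L (a - b))) + L (a - b) \<in> Q'"
    unfolding cong_mod_def by (rule ideal_add[OF Q'])
  then show ?thesis unfolding cong_mod_def by (simp add: algebra_simps)
qed

text \<open>A relation \<open>g c * y \<in> V\<close> forces \<open>f c \<in> Q'\<close>, hence \<open>g c \<in> q\<close>; so \<open>a + g r * y \<mapsto> L a + f r * s\<^sub>0\<close>
  is well defined modulo \<open>Q'\<close>.\<close>
lemma adjoin_free_cong:
  assumes g: "is_ring_hom g" and f: "is_ring_hom f" and Q': "is_ideal Q'" and q: "is_ideal q"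
    and over: "f -` Q' \<subseteq> g -` q" and V: "submodule_via g V" "q \<subseteq> V"
    and L: "quotient_linear g f q Q' V L" and free: "\<And>c. g c * y \<in> V \<Longrightarrow> f c \<in> Q'"
    and a: "a\<^sub>1 \<in> V" "a\<^sub>2 \<in> V" "a\<^sub>1 + g r\<^sub>1 * y = a\<^sub>2 + g r\<^sub>2 * y"
  shows "cong_mod Q' (L a\<^sub>1 + f r\<^sub>1 * s\<^sub>0) (L a\<^sub>2 + f r\<^sub>2 * s\<^sub>0)"
proof -
  have y: "g (r\<^sub>2 - r\<^sub>1) * y = a\<^sub>1 - a\<^sub>2"
    using a(3) by (simp add: ring_hom_diff[OF g] algebra_simps)
  then have "f (r\<^sub>2 - r\<^sub>1) \<in> Q'"
    using free submodule_via_diff[OF g V(1) a(1,2)] by simp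
  then have "a\<^sub>1 - a\<^sub>2 \<in> q"
    using y over ideal_mult_right[OF q] by (metis subsetD vimageD vimageI)
  then have "cong_mod Q' (L a\<^sub>1) (L a\<^sub>2)"
    by (rule quotient_linear_cong[OF Q' L V(2) a(1,2)])
  moreover have "cong_mod Q' (f r\<^sub>2 * s\<^sub>0) (f r\<^sub>1 * s\<^sub>0)"
    using ideal_mult_right[OF Q' \<open>f (r\<^sub>2 - r\<^sub>1) \<in> Q'\<close>, of s\<^sub>0]
    unfolding cong_mod_def by (simp add: ring_hom_diff[OF f] left_diff_distrib)
  ultimately show ?thesis
    using cong_mod_add[OF Q'] cong_mod_sym[OF Q'] by blast
qed

lemma quotient_linear_adjoinI:
  assumes g: "is_ring_hom g" and f: "is_ring_hom f" and Q': "is_ideal Q'"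
    and V: "submodule_via g V" "q \<subseteq> V" and L: "quotient_linear g f q Q' V L"
    and L': "\<And>a r. a \<in> V \<Longrightarrow> cong_mod Q' (L' (a + g r * y)) (L a + f r * s\<^sub>0)"
  shows "quotient_linear g f q Q' (adjoin g V y) L'"
  unfolding quotient_linear_def linear_mod_def
proof (intro conjI ballI allI impI subsetI)
  note cong_mod_trans[OF Q', trans]
  fix x x' assume "x \<in> adjoin g V y" "x' \<in> adjoin g V y"
  then obtain a r a' r' where a: "a \<in> V" "x = a + g r * y" and a': "a' \<in> V" "x' = a' + g r' * y"
    unfolding adjoin_def by blast
  have aa': "a + a' \<in> V" using V(1) a a' unfolding submodule_via_def by blast
  have "x + x' = (a + a') + g (r + r') * y"
    using a a' by (simp add: ring_hom_add[OF g] algebra_simps)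
  then have "cong_mod Q' (L' (x + x')) (L (a + a') + f (r + r') * s\<^sub>0)"
    using L'[OF aa'] by simp
  also have "cong_mod Q' \<dots> ((L a + L a') + f (r + r') * s\<^sub>0)"
    using L a a' aa' cong_mod_refl[OF Q'] cong_mod_add[OF Q']
    unfolding quotient_linear_def linear_mod_def by blast
  also have "(L a + L a') + f (r + r') * s\<^sub>0 = (L a + f r * s\<^sub>0) + (L a' + f r' * s\<^sub>0)"
    by (simp add: ring_hom_add[OF f] algebra_simps)
  also have "cong_mod Q' \<dots> (L' x + L' x')"
    using cong_mod_add[OF Q' cong_mod_sym[OF Q' L'[OF a(1)]] cong_mod_sym[OF Q' L'[OF a'(1)]]] a a'
    by simp
  finally show "cong_mod Q' (L' (x + x')) (L' x + L' x')" .
next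
  note cong_mod_trans[OF Q', trans]
  fix s x assume "x \<in> adjoin g V y"
  then obtain a r where a: "a \<in> V" "x = a + g r * y" unfolding adjoin_def by blast
  have sa: "g s * a \<in> V" using V(1) a unfolding submodule_via_def by blast
  have "g s * x = g s * a + g (s * r) * y"
    using a by (simp add: ring_hom_mult[OF g] algebra_simps)
  then have "cong_mod Q' (L' (g s * x)) (L (g s * a) + f (s * r) * s\<^sub>0)"
    using L'[OF sa] by simp
  also have "cong_mod Q' \<dots> (f s * L a + f (s * r) * s\<^sub>0)"
    using L a sa cong_mod_refl[OF Q'] cong_mod_add[OF Q']
    unfolding quotient_linear_def linear_mod_def by blast
  also have "f s * L a + f (s * r) * s\<^sub>0 = f s * (L a + f r * s\<^sub>0)"
    by (simp add: ring_hom_mult[OF f] algebra_simps)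
  also have "cong_mod Q' \<dots> (f s * L' x)"
    using cong_mod_mult_left[OF Q' cong_mod_sym[OF Q' L'[OF a(1)]]] a by simp
  finally show "cong_mod Q' (L' (g s * x)) (f s * L' x)" .
next
  fix x assume "x \<in> L' ` q"
  then obtain v where v: "v \<in> q" "x = L' v" by blast
  then have "cong_mod Q' x (L v)"
    using L'[of v 0] V(2) by (auto simp: ring_hom_0[OF g] ring_hom_0[OF f])
  moreover have "L v \<in> Q'" using L v(1) unfolding quotient_linear_def by blast
  ultimately show "x \<in> Q'" using cong_mod_mem_iff[OF Q'] by blast
qed

lemma quotient_linear_adjoin_free:
  assumes g: "is_ring_hom g" and f: "is_ring_hom f" and Q': "is_ideal Q'" and q: "is_ideal q"
    and over: "f -` Q' \<subseteq> g -` q" and V: "submodule_via g V" "q \<subseteq> V"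
    and L: "quotient_linear g f q Q' V L" and free: "\<And>c. g c * y \<in> V \<Longrightarrow> f c \<in> Q'"
  shows "\<exists>L'. quotient_linear g f q Q' (adjoin g V y) L' \<and> (\<forall>a\<in>V. cong_mod Q' (L' a) (L a))
    \<and> cong_mod Q' (L' y) s\<^sub>0"
proof -
  define L' where "L' x = (SOME c. \<exists>a r. a \<in> V \<and> x = a + g r * y \<and> c = L a + f r * s\<^sub>0)" for x
  have L': "cong_mod Q' (L' (a + g r * y)) (L a + f r * s\<^sub>0)" if "a \<in> V" for a r
  proof -
    have "\<exists>a' r'. a' \<in> V \<and> a + g r * y = a' + g r' * y \<and> L' (a + g r * y) = L a' + f r' * s\<^sub>0"
      unfolding L'_def by (rule someI_ex) (use that in blast)
    then obtain a' r' where a': "a' \<in> V" "a' + g r' * y = a + g r * y"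
      and "L' (a + g r * y) = L a' + f r' * s\<^sub>0"
      by metis
    then show ?thesis using adjoin_free_cong[OF g f Q' q over V L free a'(1) that a'(2)] by simp
  qed
  have "cong_mod Q' (L' a) (L a)" if "a \<in> V" for a
    using L'[OF that, of 0] by (simp add: ring_hom_0[OF g] ring_hom_0[OF f])
  moreover have "cong_mod Q' (L' y) s\<^sub>0"
  proof -
    have "0 \<in> q" by (rule ideal_0[OF q])
    then have "cong_mod Q' (L' y) (L 0 + s\<^sub>0)"
      using L'[of 0 1] V(2) by (auto simp: ring_hom_1[OF g] ring_hom_1[OF f])
    moreover have "cong_mod Q' (L 0 + s\<^sub>0) s\<^sub>0"
      using L \<open>0 \<in> q\<close> unfolding quotient_linear_def cong_mod_def by auto
    ultimately show ?thesis by (rule cong_mod_trans[OF Q'])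
  qed
  ultimately show ?thesis
    using quotient_linear_adjoinI[OF g f Q' V L L'] by blast
qed

lemma quotient_linear_adjoin_scaled:
  assumes g: "is_ring_hom g" and q: "is_ideal q" and V: "submodule_via g V"
    and L: "quotient_linear g f q Q' V L" and c: "g c * y \<in> V"
  shows "quotient_linear g f q Q' (adjoin g V y) (\<lambda>x. L (g c * x))"
proof -
  have cV: "g c * x \<in> V" if x: "x \<in> adjoin g V y" for x
  proof -
    obtain a r where "a \<in> V" "x = a + g r * y" using x unfolding adjoin_def by blast
    moreover have "g c * (a + g r * y) = g c * a + g r * (g c * y)" by (simp add: algebra_simps)
    ultimately show ?thesis using V c unfolding submodule_via_def by metis
  qed
  show ?thesis
    unfolding quotient_linear_def linear_mod_def
  proof (intro conjI ballI allI impI subsetI)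
    fix x x' assume "x \<in> adjoin g V y" "x' \<in> adjoin g V y"
    then show "cong_mod Q' (L (g c * (x + x'))) (L (g c * x) + L (g c * x'))"
      using L cV V unfolding quotient_linear_def linear_mod_def submodule_via_def distrib_left
      by blast
  next
    fix s x assume "x \<in> adjoin g V y"
    moreover have "g c * (g s * x) = g s * (g c * x)" by (simp add: mult.left_commute)
    ultimately show "cong_mod Q' (L (g c * (g s * x))) (f s * L (g c * x))"
      using L cV V unfolding quotient_linear_def linear_mod_def submodule_via_def by metis
  next
    fix x assume "x \<in> (\<lambda>x. L (g c * x)) ` q"
    then show "x \<in> Q'" using L ideal_mult_left[OF q] unfolding quotient_linear_def by blast
  qed
qed

lemma quotient_linear_adjoin:
  assumes g: "is_ring_hom g" and f: "is_ring_hom f"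
    and q: "is_prime_ideal q" and Q': "is_prime_ideal Q'" and over: "f -` Q' = g -` q"
    and V: "submodule_via g V" "q \<subseteq> V" and L: "quotient_linear g f q Q' V L"
    and w: "w \<in> V" "L w \<notin> Q'"
  shows "\<exists>L'. quotient_linear g f q Q' (adjoin g V y) L' \<and> L' w \<notin> Q'"
proof (cases "\<exists>c. f c \<notin> Q' \<and> g c * y \<in> V")
  case True
  then obtain c where c: "f c \<notin> Q'" "g c * y \<in> V" by blast
  have "cong_mod Q' (L (g c * w)) (f c * L w)"
    using L w(1) V(1) unfolding quotient_linear_def linear_mod_def submodule_via_def by blast
  then have "L (g c * w) \<notin> Q'"
    using cong_mod_mem_iff[OF prime_ideal_is_ideal[OF Q']] prime_ideal_mult_notin[OF Q' c(1) w(2)]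
    by blast
  then show ?thesis
    using quotient_linear_adjoin_scaled[OF g prime_ideal_is_ideal[OF q] V(1) L c(2)] by blast
next
  case False
  then obtain L' where "quotient_linear g f q Q' (adjoin g V y) L'" "cong_mod Q' (L' w) (L w)"
    using quotient_linear_adjoin_free[OF g f prime_ideal_is_ideal[OF Q'] prime_ideal_is_ideal[OF q]
        _ V L, of y 0] over w(1) by blast
  then show ?thesis using w(2) cong_mod_mem_iff[OF prime_ideal_is_ideal[OF Q']] by blast
qed

lemma exists_quotient_linear:
  assumes g: "is_ring_hom g" and f: "is_ring_hom f"
    and q: "is_prime_ideal q" and Q': "is_prime_ideal Q'" and over: "f -` Q' = g -` q"
    and w: "w \<notin> q" and "finite Y"
  shows "\<exists>V L. submodule_via g V \<and> q \<subseteq> V \<and> w \<in> V \<and> Y \<subseteq> V \<and>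
    quotient_linear g f q Q' V L \<and> L w \<notin> Q'"
  using \<open>finite Y\<close>
proof (induction Y rule: finite_induct)
  case empty
  have qi: "is_ideal q" and Qi: "is_ideal Q'" using q Q' prime_ideal_is_ideal by blast+
  have "quotient_linear g f q Q' q (\<lambda>_. 0)"
    using ideal_0[OF Qi] unfolding quotient_linear_def linear_mod_def cong_mod_def by auto
  moreover have "f c \<in> Q'" if "g c * w \<in> q" for c
    using that w over prime_ideal_mult_notin[OF q] by blast
  ultimately obtain L where L: "quotient_linear g f q Q' (adjoin g q w) L" "cong_mod Q' (L w) 1"
    using quotient_linear_adjoin_free[OF g f Qi qi _ submodule_via_ideal[OF qi] order_refl,
        of "\<lambda>_. 0" w 1] over by blast
  moreover have "L w \<notin> Q'"
    using L(2) cong_mod_mem_iff[OF Qi] prime_ideal_one_notin[OF Q'] by blast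
  moreover have "q \<subseteq> adjoin g q w" "w \<in> adjoin g q w"
    using subset_adjoin[OF g] mem_adjoin[OF g ideal_0[OF qi]] by blast+
  ultimately show ?case
    using submodule_via_adjoin[OF g submodule_via_ideal[OF qi]] by blast
next
  case (insert y Y)
  then obtain V L where V: "submodule_via g V" "q \<subseteq> V" "w \<in> V" "Y \<subseteq> V"
    and L: "quotient_linear g f q Q' V L" "L w \<notin> Q'"
    by blast
  obtain L' where "quotient_linear g f q Q' (adjoin g V y) L'" "L' w \<notin> Q'"
    using quotient_linear_adjoin[OF g f q Q' over V(1,2) L(1) V(3) L(2)] by blast
  moreover have "V \<subseteq> adjoin g V y" "y \<in> adjoin g V y"
    using subset_adjoin[OF g] mem_adjoin[OF g] V(2) ideal_0[OF prime_ideal_is_ideal[OF q]] by blast+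
  ultimately show ?case
    using submodule_via_adjoin[OF g V(1)] V by blast
qed

section \<open>Support of the base change\<close>

definition free_eval :: "('e \<Rightarrow> 's::comm_ring_1) \<Rightarrow> ('e \<times> 's \<Rightarrow> int) \<Rightarrow> 's" where
  "free_eval h z = (\<Sum>p | z p \<noteq> 0. of_int (z p) * h (fst p) * snd p)"

lemma free_eval_eq_sum:
  assumes "finite A" "{p. z p \<noteq> 0} \<subseteq> A"
  shows "free_eval h z = (\<Sum>p\<in>A. of_int (z p) * h (fst p) * snd p)"
  unfolding free_eval_def using assms by (intro sum.mono_neutral_left) auto

lemma free_eval_0 [simp]: "free_eval h 0 = 0" "free_eval h (\<lambda>p. 0) = 0"
  unfolding free_eval_def by simp_all

lemma free_eval_diff:
  assumes "a \<in> free_ab" "b \<in> free_ab"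
  shows "free_eval h (a - b) = free_eval h a - free_eval h b"
proof -
  let ?A = "{p. a p \<noteq> 0} \<union> {p. b p \<noteq> 0}"
  have A: "finite ?A" using assms unfolding free_ab_def by simp
  have "free_eval h (a - b) = (\<Sum>p\<in>?A. of_int ((a - b) p) * h (fst p) * snd p)"
    using A by (rule free_eval_eq_sum) auto
  moreover have "free_eval h a = (\<Sum>p\<in>?A. of_int (a p) * h (fst p) * snd p)"
    using A by (rule free_eval_eq_sum) auto
  moreover have "free_eval h b = (\<Sum>p\<in>?A. of_int (b p) * h (fst p) * snd p)"
    using A by (rule free_eval_eq_sum) auto
  ultimately show ?thesis by (simp add: sum_subtractf algebra_simps)
qed

lemma free_eval_delta [simp]: "free_eval h (delta (x, s)) = h x * s"
proof -
  have "free_eval h (delta (x, s)) = (\<Sum>p\<in>{(x, s)}. of_int (delta (x, s) p) * h (fst p) * snd p)"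
    by (rule free_eval_eq_sum) (auto simp: delta_def)
  then show ?thesis by (simp add: delta_def)
qed

lemma tens_gens_free_eval:
  fixes f :: "'r::comm_ring_1 \<Rightarrow> 's::comm_ring_1" and sc :: "'r \<Rightarrow> 'e::ab_group_add \<Rightarrow> 'e"
  assumes Q': "is_ideal Q'" and "z \<in> tens_gens f sc"
  shows "\<exists>X. finite X \<and> (\<forall>h. linear_mod Q' sc (\<lambda>r s. f r * s) X h \<longrightarrow> free_eval h z \<in> Q')"
proof -
  consider (add_left) x x' t where "z = delta (x + x', t) - delta (x, t) - delta (x', t)"
    | (add_right) x t t' where "z = delta (x, t + t') - delta (x, t) - delta (x, t')"
    | (balanced) r x t where "z = delta (sc r x, t) - delta (x, f r * t)"
    using \<open>z \<in> tens_gens f sc\<close> unfolding tens_gens_def by blast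
  then show ?thesis
  proof cases
    case add_left
    have "free_eval h z \<in> Q'" if "linear_mod Q' sc (\<lambda>r s. f r * s) {x, x', x + x'} h" for h
    proof -
      have "cong_mod Q' (h (x + x')) (h x + h x')"
        using that unfolding linear_mod_def by blast
      moreover have "free_eval h z = (h (x + x') - (h x + h x')) * t"
        unfolding add_left by (simp add: free_eval_diff) (simp add: algebra_simps)
      ultimately show ?thesis
        unfolding cong_mod_def by (simp add: ideal_mult_right[OF Q'])
    qed
    then show ?thesis by (intro exI[of _ "{x, x', x + x'}"]) simp
  next
    case add_right
    then have "free_eval h z = 0" for h
      by (simp add: free_eval_diff) (simp add: algebra_simps)
    then show ?thesis using ideal_0[OF Q'] by (intro exI[of _ "{}"]) simp
  next
    case balanced
    have "free_eval h z \<in> Q'" if "linear_mod Q' sc (\<lambda>r s. f r * s) {x, sc r x} h" for h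
    proof -
      have "cong_mod Q' (h (sc r x)) (f r * h x)"
        using that unfolding linear_mod_def by blast
      moreover have "free_eval h z = (h (sc r x) - f r * h x) * t"
        unfolding balanced by (simp add: free_eval_diff) (simp add: algebra_simps)
      ultimately show ?thesis
        unfolding cong_mod_def by (simp add: ideal_mult_right[OF Q'])
    qed
    then show ?thesis by (intro exI[of _ "{x, sc r x}"]) simp
  qed
qed

text \<open>A relation in \<open>E \<otimes> S\<close> involves only finitely many elements of \<open>E\<close>.\<close>
lemma tens_sub_free_eval:
  fixes f :: "'r::comm_ring_1 \<Rightarrow> 's::comm_ring_1" and sc :: "'r \<Rightarrow> 'e::ab_group_add \<Rightarrow> 'e"
  assumes Q': "is_ideal Q'"
  shows "z \<in> tens_sub f sc \<Longrightarrow>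
    \<exists>X. finite X \<and> (\<forall>h. linear_mod Q' sc (\<lambda>r s. f r * s) X h \<longrightarrow> free_eval h z \<in> Q')"
proof (induction rule: tens_sub.induct)
  case (gen z)
  then show ?case by (rule tens_gens_free_eval[OF Q'])
next
  case zero
  show ?case using ideal_0[OF Q'] by (intro exI[of _ "{}"]) simp
next
  case (diff a b)
  obtain Xa where Xa: "finite Xa" "\<And>h. linear_mod Q' sc (\<lambda>r s. f r * s) Xa h \<Longrightarrow> free_eval h a \<in> Q'"
    using diff.IH(1) by blast
  obtain Xb where Xb: "finite Xb" "\<And>h. linear_mod Q' sc (\<lambda>r s. f r * s) Xb h \<Longrightarrow> free_eval h b \<in> Q'"
    using diff.IH(2) by blast
  have "free_eval h (a - b) \<in> Q'" if "linear_mod Q' sc (\<lambda>r s. f r * s) (Xa \<union> Xb) h" for h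
    using Xa(2) Xb(2) linear_mod_subset[OF that] ideal_diff[OF Q']
      free_eval_diff[OF tens_sub_free_ab[OF diff.hyps(1)] tens_sub_free_ab[OF diff.hyps(2)]]
    by (metis sup_ge1 sup_ge2)
  then show ?case using Xa(1) Xb(1) by (intro exI[of _ "Xa \<union> Xb"]) (simp add: fun_diff_def)
qed

lemma linear_mod_comp:
  assumes Q': "is_ideal Q'" and \<mu>: "linear_mod q scB (*) UNIV \<mu>"
    and V: "submodule_via g V" "q \<subseteq> V" and L: "quotient_linear g f q Q' V L"
    and X: "\<mu> ` X \<subseteq> V" and sc: "\<And>r x. sc r x = scB (g r) x"
  shows "linear_mod Q' sc (\<lambda>r s. f r * s) X (\<lambda>x. L (\<mu> x))"
  unfolding linear_mod_def
proof (intro conjI ballI allI impI)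
  fix x x' assume x: "x \<in> X" "x' \<in> X" "x + x' \<in> X"
  have sum: "\<mu> x + \<mu> x' \<in> V" using V(1) X x unfolding submodule_via_def by blast
  have "\<mu> (x + x') - (\<mu> x + \<mu> x') \<in> q"
    using \<mu> unfolding linear_mod_def cong_mod_def by blast
  then have "cong_mod Q' (L (\<mu> (x + x'))) (L (\<mu> x + \<mu> x'))"
    using X x sum by (intro quotient_linear_cong[OF Q' L V(2)]) auto
  moreover have "cong_mod Q' (L (\<mu> x + \<mu> x')) (L (\<mu> x) + L (\<mu> x'))"
    using L X x sum unfolding quotient_linear_def linear_mod_def by blast
  ultimately show "cong_mod Q' (L (\<mu> (x + x'))) (L (\<mu> x) + L (\<mu> x'))"
    by (rule cong_mod_trans[OF Q'])
next
  fix r x assume x: "x \<in> X" "sc r x \<in> X"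
  have scale: "g r * \<mu> x \<in> V" using V(1) X x unfolding submodule_via_def by blast
  have "\<mu> (sc r x) - g r * \<mu> x \<in> q"
    using \<mu> unfolding linear_mod_def cong_mod_def sc by blast
  then have "cong_mod Q' (L (\<mu> (sc r x))) (L (g r * \<mu> x))"
    using X x scale by (intro quotient_linear_cong[OF Q' L V(2)]) auto
  moreover have "cong_mod Q' (L (g r * \<mu> x)) (f r * L (\<mu> x))"
    using L X x scale unfolding quotient_linear_def linear_mod_def by blast
  ultimately show "cong_mod Q' (L (\<mu> (sc r x))) (f r * L (\<mu> x))"
    by (rule cong_mod_trans[OF Q'])
qed

lemma mem_if_delta_in_tens_sub:
  assumes g: "is_ring_hom g" and f: "is_ring_hom f"
    and q: "is_prime_ideal q" and Q': "is_prime_ideal Q'" and over: "f -` Q' = g -` q"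
    and \<mu>: "linear_mod q scB (*) UNIV \<mu>" "\<mu> y \<notin> q" and sc: "\<And>r x. sc r x = scB (g r) x"
    and "delta (y, t) \<in> tens_sub f sc"
  shows "t \<in> Q'"
proof -
  have Qi: "is_ideal Q'" using Q' prime_ideal_is_ideal by blast
  obtain X where X: "finite X"
    and eval: "\<And>h. linear_mod Q' sc (\<lambda>r s. f r * s) X h \<Longrightarrow> free_eval h (delta (y, t)) \<in> Q'"
    using tens_sub_free_eval[OF Qi \<open>delta (y, t) \<in> tens_sub f sc\<close>] by blast
  obtain V L where V: "submodule_via g V" "q \<subseteq> V" "\<mu> ` X \<subseteq> V"
    and L: "quotient_linear g f q Q' V L" "L (\<mu> y) \<notin> Q'"
    using exists_quotient_linear[OF g f q Q' over \<mu>(2) finite_imageI[OF X]] by blast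
  have "L (\<mu> y) * t \<in> Q'"
    using eval[OF linear_mod_comp[OF Qi \<mu>(1) V(1,2) L(1) V(3) sc]] by simp
  then show ?thesis using L(2) Q' unfolding is_prime_ideal_def by blast
qed

lemma exists_prime_over_annihilator:
  assumes "module scB" and g: "is_ring_hom g" and P: "is_prime_ideal P"
    and x: "\<And>r. r \<notin> P \<Longrightarrow> scB (g r) x \<noteq> 0"
  shows "\<exists>q. is_prime_ideal q \<and> g -` q \<subseteq> P \<and> (\<forall>c. c \<notin> q \<longrightarrow> scB c x \<noteq> 0)"
proof -
  interpret module scB by fact
  define I where "I = {c. scB c x = 0}"
  have "is_ideal I"
    unfolding is_ideal_def I_def by (simp add: scale_left_distrib flip: scale_scale)
  moreover have "I \<inter> g ` (- P) = {}" using x unfolding I_def by auto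
  moreover have "1 \<in> g ` (- P)"
    using ring_hom_1[OF g] prime_ideal_one_notin[OF P] by force
  moreover have "a * b \<in> g ` (- P)" if ab: "a \<in> g ` (- P)" "b \<in> g ` (- P)" for a b
  proof -
    from ab obtain r r' where "r \<notin> P" "r' \<notin> P" "a = g r" "b = g r'" by blast
    moreover from this have "a * b = g (r * r')" by (simp add: ring_hom_mult[OF g])
    ultimately show ?thesis using prime_ideal_mult_notin[OF P] by blast
  qed
  ultimately obtain q where "is_prime_ideal q" "I \<subseteq> q" "q \<inter> g ` (- P) = {}"
    using prime_ideal_disjoint_multiplicative by metis
  then show ?thesis unfolding I_def by blast
qed

lemma Supp_tensor_if_Supp_type_vimage:
  assumes M: "module sc" and afg: "afg_witness sc g scB" and f: "is_ring_hom f"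
    and gd: "going_down f" and Q: "is_prime_ideal Q" and supp: "f -` Q \<in> Supp_type sc"
  shows "Q \<in> Supp_tensor f sc"
proof -
  obtain F where g: "is_ring_hom g" and MB: "module scB"
    and F: "finite F" "module.span scB F = UNIV" and sc: "\<And>r x. sc r x = scB (g r) x"
    using afg unfolding afg_witness_def by blast
  obtain x where x: "\<And>r. r \<notin> f -` Q \<Longrightarrow> scB (g r) x \<noteq> 0"
    using supp Supp_type_iff[OF M] sc by metis
  obtain q where q: "is_prime_ideal q" "g -` q \<subseteq> f -` Q" and ann: "\<And>c. c \<notin> q \<Longrightarrow> scB c x \<noteq> 0"
    using exists_prime_over_annihilator[OF MB g prime_ideal_vimage[OF f Q] x] by blast
  obtain Q' where Q': "is_prime_ideal Q'" "Q' \<subseteq> Q" "f -` Q' = g -` q"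
    using gd Q prime_ideal_vimage[OF g q(1)] q(2) unfolding going_down_def spec_map_def by blast
  obtain \<mu> y where \<mu>: "linear_mod q scB (*) UNIV \<mu>" "\<mu> y \<notin> q"
    using module.exists_functional_mod[OF MB q(1) F ann] by blast
  have "t \<in> Q" if "free_sact t (delta (y, 1)) \<in> tens_sub f sc" for t
    using mem_if_delta_in_tens_sub[OF g f q(1) Q'(1) Q'(3) \<mu> sc] that Q'(2) by auto
  then show ?thesis
    unfolding Supp_tensor_iff using Q by (intro conjI bexI[of _ "delta (y, 1)"]) auto
qed

theorem proposition4p4:
  fixes sc :: "'r::comm_ring_1 \<Rightarrow> 'e::ab_group_add \<Rightarrow> 'e"
    and f :: "'r \<Rightarrow> 's::comm_ring_1"
    and g :: "'r \<Rightarrow> 'b::comm_ring_1"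
    and scB :: "'b \<Rightarrow> 'e \<Rightarrow> 'e"
  assumes "module sc"
    and "afg_witness sc g scB"
    and "is_ring_hom f"
    and "going_down f"
  shows "{Q. is_prime_ideal Q \<and> spec_map f Q \<in> Supp_type sc} = Supp_tensor f sc"
proof (intro set_eqI iffI)
  fix Q assume "Q \<in> {Q. is_prime_ideal Q \<and> spec_map f Q \<in> Supp_type sc}"
  then show "Q \<in> Supp_tensor f sc"
    using Supp_tensor_if_Supp_type_vimage[OF assms(1-4)] unfolding spec_map_def by blast
next
  fix Q assume "Q \<in> Supp_tensor f sc"
  then show "Q \<in> {Q. is_prime_ideal Q \<and> spec_map f Q \<in> Supp_type sc}"
    using Supp_type_vimage_if_Supp_tensor[OF assms(1,3)] Supp_tensor_iff
    unfolding spec_map_def by blast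
qed

end
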